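(* Let $F$ be a compact metric space, $Y$ a normed space, and $S\colon F\to Y$ a continuous mapping. Then for every integer $n\ge2$, \[ e_n^{\mathrm{cont}}(S)\le 2\, e_{2^{n-2}}^{\mathrm{cont\text{-}non}}(S). \]
   Context: An algorithm using $n$ adaptive continuous measurements is a map $A_n\colon F\to Y$ of the form $A_n(f)=\Phi(y_1,\dots,y_n)$, where $y_1=\lambda_1(f)$ for a continuous $\lambda_1\colon F\to\mathbb{R}$ and, for $k\ge2$, $y_k=\lambda_k^{(y_1,\dots,y_{k-1})}(f)$ with continuous functionals $\lambda_k^{(y_1,\dots,y_{k-1})}\colon F\to\mathbb{R}$ whose choice may depend arbitrarily on the previously computed values; $\Phi\colon\mathbb{R}^n\to Y$ is arbitrary. $e_n^{\mathrm{cont}}(S):=\inf_{A_n}\sup_{f\in F}\|S(f)-A_n(f)\|_Y$ over all such algorithms. $e_k^{\mathrm{cont\text{-}non}}(S):=\inf\{\sup_{f\in F}\|S(f)-\Phi(N(f))\|_Y : N\colon F\to\mathbb{R}^k\text{ continuous},\ \Phi\colon\mathbb{R}^k\to Y\text{ arbitrary}\}$. *)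

theory Defs
  imports "HOL-Analysis.Analysis"
begin

text \<open>Adaptive information: measurement functionals lam k ys (the k-th functional,
  0-based, chosen depending on the list ys of the previously computed values).
  adaptive_info lam k f is the list [y_1, ..., y_k] of the first k computed values.\<close>
fun adaptive_info :: "(nat \<Rightarrow> real list \<Rightarrow> 'a \<Rightarrow> real) \<Rightarrow> nat \<Rightarrow> 'a \<Rightarrow> real list" where
  "adaptive_info lam 0 f = []"
| "adaptive_info lam (Suc k) f =
     adaptive_info lam k f @ [lam k (adaptive_info lam k f) f]"

definition wc_error :: "'a set \<Rightarrow> ('a \<Rightarrow> 'b::real_normed_vector) \<Rightarrow> ('a \<Rightarrow> 'b) \<Rightarrow> ereal" where
  "wc_error F S A = (SUP f\<in>F. ereal (norm (S f - A f)))"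

definition e_cont :: "'a::topological_space set \<Rightarrow> ('a \<Rightarrow> 'b::real_normed_vector) \<Rightarrow> nat \<Rightarrow> ereal" where
  "e_cont F S n =
     (INF A\<in>{(\<lambda>f. Phi (adaptive_info lam n f)) | (lam :: nat \<Rightarrow> real list \<Rightarrow> 'a \<Rightarrow> real) (Phi :: real list \<Rightarrow> 'b).
                 \<forall>k<n. \<forall>ys. continuous_on F (lam k ys)}.
        wc_error F S A)"

text \<open>k-th minimal error with nonadaptive continuous information N : F \<rightarrow> R^k
  (given componentwise by continuous functionals N 0, ..., N (k-1)).\<close>
definition e_cont_non :: "'a::topological_space set \<Rightarrow> ('a \<Rightarrow> 'b::real_normed_vector) \<Rightarrow> nat \<Rightarrow> ereal" where
  "e_cont_non F S k =
     (INF A\<in>{(\<lambda>f. Phi (map (\<lambda>i::nat. N i f) [0..<k])) | (N :: nat \<Rightarrow> 'a \<Rightarrow> real) (Phi :: real list \<Rightarrow> 'b).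
                 \<forall>i<k. continuous_on F (N i)}.
        wc_error F S A)"

end

theory Submission
  imports Defs
begin

text \<open>By compactness, a nonadaptive algorithm with continuous functionals \<open>N\<^sub>0, \<dots>, N\<^sub>m\<^sub>-\<^sub>1\<close>
  and error below \<open>r\<close> gives a \<open>\<delta> > 0\<close> such that \<open>\<delta>\<close>-close values of all \<open>N\<^sub>i\<close> at \<open>f\<close> and \<open>g\<close>
  force \<open>\<parallel>S f - S g\<parallel> < 2 r\<close>. It therefore suffices to determine the vector \<open>(N\<^sub>i f)\<close> up to
  \<open>\<delta>\<close> from \<open>n\<close> adaptive continuous measurements; an algorithm may then output \<open>S g\<close> for
  any \<open>g\<close> producing the same measurements.

  After scaling, step \<open>j < n - 1\<close> moves the
  coordinates continuously towards the grid \<open>2\<^sup>n\<^sup>-\<^sup>1\<^sup>-\<^sup>j \<int>\<close>. The measurement of step \<open>j\<close>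
  is an order statistic of the distances of the coordinates to that grid: either it is
  below \<open>1/2\<close>, and then enough coordinates can be snapped onto the grid by a continuous
  rounding map, or it certifies that enough coordinates lie exactly halfway between grid
  points, i.e. on the next finer grid. In both cases the number of coordinates off the
  current grid is halved, so after \<open>n - 1\<close> steps all coordinates are integers, each moved
  by a bounded amount. The last measurement encodes these integers in a large base as a
  single real number, from which they can be read off.\<close>

section \<open>Order statistics\<close>

lemma continuous_on_Max_image:
  fixes f :: "'i \<Rightarrow> 'a::topological_space \<Rightarrow> 'b::linorder_topology"
  assumes "finite A" "A \<noteq> {}" "\<And>a. a \<in> A \<Longrightarrow> continuous_on S (f a)"
  shows "continuous_on S (\<lambda>x. Max ((\<lambda>a. f a x) ` A))"
  using assms
proof (induction A rule: finite_ne_induct)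
  case (insert b A)
  then show ?case by (simp add: continuous_on_max)
qed simp

lemma continuous_on_Min_image:
  fixes f :: "'i \<Rightarrow> 'a::topological_space \<Rightarrow> 'b::linorder_topology"
  assumes "finite A" "A \<noteq> {}" "\<And>a. a \<in> A \<Longrightarrow> continuous_on S (f a)"
  shows "continuous_on S (\<lambda>x. Min ((\<lambda>a. f a x) ` A))"
  using assms
proof (induction A rule: finite_ne_induct)
  case (insert b A)
  then show ?case by (simp add: continuous_on_min)
qed simp

text \<open>The \<open>p\<close>-th smallest of \<open>r 0, \<dots>, r (m - 1)\<close>, in a form whose continuity in \<open>r\<close>
  is evident.\<close>
definition order_stat :: "nat \<Rightarrow> nat \<Rightarrow> (nat \<Rightarrow> 'a::linorder) \<Rightarrow> 'a" where
  "order_stat m p r = Min ((\<lambda>J. Max (r ` J)) ` {J. J \<subseteq> {..<m} \<and> card J = p})"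

lemma finite_subsets_card: "finite {J. J \<subseteq> {..<m::nat} \<and> card J = p}"
  by (rule finite_subset[of _ "Pow {..<m}"]) auto

lemma order_stat_le_Max:
  assumes "J \<subseteq> {..<m}" "card J = p"
  shows "order_stat m p r \<le> Max (r ` J)"
  unfolding order_stat_def using assms finite_subsets_card by (intro Min_le) auto

lemma order_stat_attained:
  assumes "p \<le> m"
  obtains J where "J \<subseteq> {..<m}" "card J = p" "\<And>i. i \<in> J \<Longrightarrow> r i \<le> order_stat m p r"
proof -
  have "{..<p} \<in> {J. J \<subseteq> {..<m} \<and> card J = p}" using assms by auto
  then have "order_stat m p r \<in> (\<lambda>J. Max (r ` J)) ` {J. J \<subseteq> {..<m} \<and> card J = p}"
    unfolding order_stat_def by (intro Min_in finite_imageI finite_subsets_card) blast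
  then obtain J where J: "J \<subseteq> {..<m}" "card J = p" "order_stat m p r = Max (r ` J)" by auto
  moreover have "finite J" using J(1) finite_subset by blast
  ultimately show ?thesis using that by simp
qed

lemma card_less_order_stat:
  assumes "1 \<le> p" "c \<le> order_stat m p r"
  shows "card {i. i < m \<and> r i < c} < p"
proof (rule ccontr)
  assume "\<not> ?thesis"
  then obtain J where J: "J \<subseteq> {i. i < m \<and> r i < c}" "card J = p"
    using obtain_subset_with_card_n[of p] by (metis not_less)
  then have "finite J" "J \<noteq> {}" using assms(1) by (auto intro: card_ge_0_finite)
  then have "Max (r ` J) < c" using J(1) by auto
  moreover have "order_stat m p r \<le> Max (r ` J)" using J by (intro order_stat_le_Max) auto
  ultimately show False using assms(2) by simp
qed

lemma continuous_on_order_stat: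
  fixes r :: "nat \<Rightarrow> 'a::topological_space \<Rightarrow> 'b::linorder_topology"
  assumes "1 \<le> p" "p \<le> m" "\<And>i. i < m \<Longrightarrow> continuous_on S (r i)"
  shows "continuous_on S (\<lambda>x. order_stat m p (\<lambda>i. r i x))"
  unfolding order_stat_def
proof (rule continuous_on_Min_image[OF finite_subsets_card])
  show "{J. J \<subseteq> {..<m} \<and> card J = p} \<noteq> {}"
    using assms by (auto intro!: exI[of _ "{..<p}"])
  fix J assume "J \<in> {J. J \<subseteq> {..<m} \<and> card J = p}"
  then have "finite J" "J \<noteq> {}" "J \<subseteq> {..<m}"
    using assms(1) finite_subset by fastforce+
  then show "continuous_on S (\<lambda>x. Max ((\<lambda>i. r i x) ` J))"
    using assms(3) by (intro continuous_on_Max_image) auto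
qed

section \<open>Continuous rounding\<close>

lemma infdist_Ints_le_half: "infdist (u::real) \<int> \<le> 1/2"
proof -
  have "infdist u \<int> \<le> dist u (of_int (round u))" by (rule infdist_le) simp
  also have "\<dots> \<le> 1/2" using of_int_round_abs_le[of u] by (simp add: dist_real_def abs_minus_commute)
  finally show ?thesis .
qed

lemma infdist_Ints_attained:
  obtains z :: int where "infdist (u::real) \<int> = \<bar>u - of_int z\<bar>"
proof -
  obtain x where "x \<in> (\<int>::real set)" "infdist u \<int> = dist u x"
    using infdist_attains_inf[OF closed_Ints] Ints_0 by blast
  then show ?thesis using that by (auto elim!: Ints_cases simp: dist_real_def)
qed

lemma infdist_Ints_eq_half_imp: "infdist (u::real) \<int> = 1/2 \<Longrightarrow> 2 * u \<in> \<int>"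
proof -
  assume half: "infdist u \<int> = 1/2"
  obtain z :: int where "infdist u \<int> = \<bar>u - of_int z\<bar>" by (rule infdist_Ints_attained)
  with half have "u = of_int z + 1/2 \<or> u = of_int z - 1/2" by linarith
  then have "2 * u = of_int (2 * z + 1) \<or> 2 * u = of_int (2 * z - 1)" by auto
  then show ?thesis by (metis Ints_of_int)
qed

definition ramp :: "real \<Rightarrow> real \<Rightarrow> real" where
  "ramp c s = max 0 (min 1 ((1/2 - s) / (1/2 - c)))"

lemma ramp_eq_0: "c < 1/2 \<Longrightarrow> 1/2 \<le> s \<Longrightarrow> ramp c s = 0"
  unfolding ramp_def by (simp add: divide_nonpos_pos)

lemma ramp_eq_1: "c < 1/2 \<Longrightarrow> s \<le> c \<Longrightarrow> ramp c s = 1"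
  unfolding ramp_def by simp

lemma ramp_bounds: "0 \<le> ramp c s" "ramp c s \<le> 1"
  unfolding ramp_def by auto

text \<open>Integers are \<open>1\<close> apart, so at most one summand is nonzero: \<open>soft_round c L\<close> moves \<open>u\<close>
  onto the integer \<open>z \<in> [-L, L]\<close> if \<open>\<bar>u - z\<bar> \<le> c\<close>, and by at most \<open>1/2\<close> in any case.
  Restricting the sum to \<open>[-L, L]\<close> makes it finite and hence continuous.\<close>
definition soft_round :: "real \<Rightarrow> int \<Rightarrow> real \<Rightarrow> real" where
  "soft_round c L u = u - (\<Sum>z\<in>{-L..L}. (u - of_int z) * ramp c \<bar>u - of_int z\<bar>)"

lemma continuous_on_soft_round [continuous_intros]:
  "continuous_on A g \<Longrightarrow> continuous_on A (\<lambda>x. soft_round c L (g x))"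
  unfolding soft_round_def ramp_def divide_inverse by (intro continuous_intros) auto

lemma soft_round_near_int:
  assumes "c < 1/2" "z \<in> {-L..L}" "\<bar>u - of_int z\<bar> < 1/2"
  shows "soft_round c L u = u - (u - of_int z) * ramp c \<bar>u - of_int z\<bar>"
proof -
  have "(u - of_int z') * ramp c \<bar>u - of_int z'\<bar> = 0" if "z' \<noteq> z" for z'
  proof -
    have "1 \<le> \<bar>of_int z - (of_int z' :: real)\<bar>"
      using that
      by (metis of_int_1_le_iff of_int_abs of_int_diff zabs_less_one_iff not_le right_minus_eq)
    then have "1/2 \<le> \<bar>u - of_int z'\<bar>" using assms(3) by linarith
    then show ?thesis using assms(1) ramp_eq_0 by simp
  qed
  then have "(\<Sum>z'\<in>{-L..L}. (u - of_int z') * ramp c \<bar>u - of_int z'\<bar>)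
      = (u - of_int z) * ramp c \<bar>u - of_int z\<bar>"
    by (subst sum.remove[OF finite_atLeastAtMost_int assms(2)]) (simp add: sum.neutral)
  then show ?thesis unfolding soft_round_def by simp
qed

lemma soft_round_eq_int:
  assumes "c < 1/2" "z \<in> {-L..L}" "\<bar>u - of_int z\<bar> \<le> c"
  shows "soft_round c L u = of_int z"
  using soft_round_near_int[OF assms(1,2)] ramp_eq_1[OF assms(1,3)] assms(1,3) by simp

lemma soft_round_dist:
  assumes "c < 1/2"
  shows "\<bar>soft_round c L u - u\<bar> \<le> 1/2"
proof (cases "\<exists>z\<in>{-L..L}. \<bar>u - of_int z\<bar> < 1/2")
  case True
  then obtain z where z: "z \<in> {-L..L}" "\<bar>u - of_int z\<bar> < 1/2" by blast
  have "\<bar>(u - of_int z) * ramp c \<bar>u - of_int z\<bar>\<bar> \<le> \<bar>u - of_int z\<bar> * 1"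
    unfolding abs_mult using ramp_bounds[of c] by (intro mult_left_mono) auto
  then show ?thesis using soft_round_near_int[OF assms z] z(2) by simp
next
  case False
  then have "(\<Sum>z\<in>{-L..L}. (u - of_int z) * ramp c \<bar>u - of_int z\<bar>) = 0"
    using ramp_eq_0[OF assms] by (intro sum.neutral) (auto simp: not_less)
  then show ?thesis unfolding soft_round_def by simp
qed

definition halve_step :: "real \<Rightarrow> int \<Rightarrow> real \<Rightarrow> real \<Rightarrow> real" where
  "halve_step h L y u = (if y < 1/2 then h * soft_round y L (u / h) else u)"

lemma continuous_on_halve_step [continuous_intros]:
  "continuous_on A g \<Longrightarrow> continuous_on A (\<lambda>x. halve_step h L y (g x))"
  unfolding halve_step_def by (cases "y < 1/2"; cases "h = 0") (auto intro!: continuous_intros)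

lemma halve_step_dist:
  assumes "h > 0"
  shows "\<bar>halve_step h L y u - u\<bar> \<le> h / 2"
proof (cases "y < 1/2")
  case True
  have "halve_step h L y u - u = h * (soft_round y L (u / h) - u / h)"
    using True assms by (simp add: halve_step_def algebra_simps)
  then have "\<bar>halve_step h L y u - u\<bar> = h * \<bar>soft_round y L (u / h) - u / h\<bar>"
    using assms by (simp add: abs_mult)
  also have "\<dots> \<le> h * (1/2)" using soft_round_dist[OF True] assms by (intro mult_left_mono) auto
  finally show ?thesis by simp
qed (use assms in \<open>simp add: halve_step_def\<close>)

lemma card_soft_round_Ints:
  fixes w :: "nat \<Rightarrow> real"
  assumes "p \<le> m" "y = order_stat m p (\<lambda>i. infdist (w i) \<int>)" "y < 1/2"
    and "\<And>i. i < m \<Longrightarrow> \<bar>w i\<bar> \<le> of_int L - 1"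
  shows "p \<le> card {i. i < m \<and> soft_round y L (w i) \<in> \<int>}"
proof -
  obtain J where J: "J \<subseteq> {..<m}" "card J = p" "\<And>i. i \<in> J \<Longrightarrow> infdist (w i) \<int> \<le> y"
    using order_stat_attained[OF assms(1)] assms(2) by metis
  have "J \<subseteq> {i. i < m \<and> soft_round y L (w i) \<in> \<int>}"
  proof
    fix i assume i: "i \<in> J"
    obtain z :: int where z: "infdist (w i) \<int> = \<bar>w i - of_int z\<bar>" by (rule infdist_Ints_attained)
    have "\<bar>w i\<bar> \<le> of_int L - 1" using i J(1) assms(4) by auto
    moreover have "\<bar>w i - of_int z\<bar> \<le> 1/2" using z infdist_Ints_le_half[of "w i"] by simp
    ultimately have "- of_int L \<le> (of_int z :: real) \<and> (of_int z :: real) \<le> of_int L"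
      unfolding abs_le_iff by linarith
    then have "z \<in> {-L..L}" by simp
    then have "soft_round y L (w i) = of_int z"
      using J(3)[OF i] z assms(3) by (intro soft_round_eq_int) auto
    then show "i \<in> {i. i < m \<and> soft_round y L (w i) \<in> \<int>}" using i J(1) by auto
  qed
  from card_mono[OF _ this] show ?thesis using J(2) by simp
qed

lemma card_half_Ints:
  fixes w :: "nat \<Rightarrow> real"
  assumes "q < m" "d \<le> 2 * q + 1" "m - d \<le> card {i. i < m \<and> w i \<in> \<int>}"
    and "1/2 \<le> order_stat m (m - q) (\<lambda>i. infdist (w i) \<int>)"
  shows "m - q \<le> card {i. i < m \<and> 2 * w i \<in> \<int>}"
proof -
  define Ints_at where "Ints_at = {i. i < m \<and> w i \<in> \<int>}"
  define near where "near = {i. i < m \<and> infdist (w i) \<int> < 1/2}"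
  define half where "half = {i. i < m \<and> \<not> infdist (w i) \<int> < 1/2}"
  have "card near < m - q"
    unfolding near_def using assms(1,4) by (intro card_less_order_stat) auto
  moreover have "near \<union> half = {..<m}" "near \<inter> half = {}" unfolding near_def half_def by auto
  then have "card near + card half = m"
    by (metis card_Un_disjoint card_lessThan finite_Un finite_lessThan)
  ultimately have "q + 1 \<le> card half" by linarith
  moreover have "Ints_at \<inter> half = {}" unfolding Ints_at_def half_def by auto
  moreover have "Ints_at \<union> half \<subseteq> {i. i < m \<and> 2 * w i \<in> \<int>}"
  proof
    fix i assume "i \<in> Ints_at \<union> half"
    moreover have "infdist (w i) \<int> = 1/2" if "\<not> infdist (w i) \<int> < 1/2"
      using that infdist_Ints_le_half[of "w i"] by simp
    ultimately show "i \<in> {i. i < m \<and> 2 * w i \<in> \<int>}"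
      unfolding Ints_at_def half_def using infdist_Ints_eq_half_imp by auto
  qed
  moreover have "finite Ints_at" "finite half" unfolding Ints_at_def half_def by simp_all
  ultimately have "card Ints_at + (q + 1) \<le> card {i. i < m \<and> 2 * w i \<in> \<int>}"
    using card_mono[of "{i. i < m \<and> 2 * w i \<in> \<int>}" "Ints_at \<union> half"]
    by (simp add: card_Un_disjoint)
  then show ?thesis using assms(2,3) unfolding Ints_at_def by linarith
qed

lemma card_grid_halve_step:
  fixes x :: "nat \<Rightarrow> real"
  assumes "h > 0" "q < m" "d \<le> 2 * q + 1" "m - d \<le> card {i. i < m \<and> x i / h \<in> \<int>}"
    and "\<And>i. i < m \<Longrightarrow> \<bar>x i / h\<bar> \<le> of_int L - 1"
    and "y = order_stat m (m - q) (\<lambda>i. infdist (x i / h) \<int>)"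
  shows "m - q \<le> card {i. i < m \<and> halve_step h L y (x i) / (h / 2) \<in> \<int>}"
proof (cases "y < 1/2")
  case True
  have "halve_step h L y (x i) / (h / 2) = 2 * soft_round y L (x i / h)" for i
    using True assms(1) by (simp add: halve_step_def)
  then have sub: "{i. i < m \<and> soft_round y L (x i / h) \<in> \<int>}
      \<subseteq> {i. i < m \<and> halve_step h L y (x i) / (h / 2) \<in> \<int>}" by auto
  have "m - q \<le> card {i. i < m \<and> soft_round y L (x i / h) \<in> \<int>}"
    by (rule card_soft_round_Ints[OF _ assms(6) True assms(5)]) simp
  then show ?thesis using card_mono[OF _ sub] by simp
next
  case False
  then have "halve_step h L y (x i) / (h / 2) = 2 * (x i / h)" for i
    by (simp add: halve_step_def)
  moreover have "m - q \<le> card {i. i < m \<and> 2 * (x i / h) \<in> \<int>}"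
    using card_half_Ints[OF assms(2,3,4)] False assms(6) by simp
  ultimately show ?thesis by (simp only:)
qed

lemma sum_int_digits_eq_0_imp:
  fixes a :: "nat \<Rightarrow> real"
  assumes "\<And>i. i < k \<Longrightarrow> a i \<in> \<int>" "\<And>i. i < k \<Longrightarrow> \<bar>a i\<bar> \<le> W - 1"
    and "(\<Sum>i<k. a i * W ^ i) = 0"
  shows "\<forall>i<k. a i = 0"
  using assms
proof (induction k)
  case (Suc k)
  have W: "1 \<le> W" using Suc.prems(2)[of 0] by simp
  have "\<bar>\<Sum>i<k. a i * W ^ i\<bar> \<le> (\<Sum>i<k. (W - 1) * W ^ i)"
  proof (rule order_trans[OF sum_abs sum_mono])
    fix i assume "i \<in> {..<k}"
    then have "\<bar>a i\<bar> * W ^ i \<le> (W - 1) * W ^ i"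
      using Suc.prems(2) W by (intro mult_right_mono) auto
    then show "\<bar>a i * W ^ i\<bar> \<le> (W - 1) * W ^ i" using W by (simp add: abs_mult)
  qed
  also have "\<dots> = W ^ k - 1" by (simp add: power_diff_1_eq sum_distrib_left)
  finally have low: "\<bar>\<Sum>i<k. a i * W ^ i\<bar> < W ^ k" by simp
  have top: "\<bar>\<Sum>i<k. a i * W ^ i\<bar> = \<bar>a k\<bar> * W ^ k"
    using Suc.prems(3) W by (simp add: abs_mult add_eq_0_iff2)
  have "a k = 0"
  proof (rule ccontr)
    assume "a k \<noteq> 0"
    then have "1 \<le> \<bar>a k\<bar>" using Suc.prems(1)[of k] Ints_nonzero_abs_ge1 by simp
    then have "W ^ k \<le> \<bar>a k\<bar> * W ^ k" using W by (simp add: mult_le_cancel_right1)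
    then show False using low top by simp
  qed
  moreover have "\<forall>i<k. a i = 0" using Suc \<open>a k = 0\<close> by simp
  ultimately show ?case using less_Suc_eq by auto
qed simp

definition base_enc :: "nat \<Rightarrow> real \<Rightarrow> (nat \<Rightarrow> real) \<Rightarrow> real" where
  "base_enc k W x = (\<Sum>i<k. x i * W ^ i)"

lemma continuous_on_base_enc:
  "(\<And>i. i < k \<Longrightarrow> continuous_on A (\<lambda>f. x f i)) \<Longrightarrow> continuous_on A (\<lambda>f. base_enc k W (x f))"
  unfolding base_enc_def by (intro continuous_intros) auto

lemma base_enc_inj:
  assumes "2 * M + 1 \<le> W"
    and "\<And>i. i < k \<Longrightarrow> a i \<in> \<int> \<and> \<bar>a i\<bar> \<le> M" "\<And>i. i < k \<Longrightarrow> b i \<in> \<int> \<and> \<bar>b i\<bar> \<le> M"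
    and "base_enc k W a = base_enc k W b"
  shows "\<forall>i<k. a i = b i"
proof -
  have "(\<Sum>i<k. (a i - b i) * W ^ i) = base_enc k W a - base_enc k W b"
    unfolding base_enc_def by (simp add: left_diff_distrib sum_subtractf)
  moreover have "\<bar>a i - b i\<bar> \<le> W - 1" if "i < k" for i
    using assms(1) assms(2,3)[OF that] by linarith
  ultimately have "\<forall>i<k. a i - b i = 0"
    using assms(2,3,4) by (intro sum_int_digits_eq_0_imp) auto
  then show ?thesis by simp
qed

section \<open>Adaptive rounding of finitely many reals\<close>

lemma length_adaptive_info [simp]: "length (adaptive_info lam k f) = k"
  by (induction k) auto

lemma take_adaptive_info: "j \<le> k \<Longrightarrow> take j (adaptive_info lam k f) = adaptive_info lam j f"
  by (induction k) (auto simp: le_Suc_eq)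

lemma nth_adaptive_info: "j < k \<Longrightarrow> adaptive_info lam k f ! j = lam j (adaptive_info lam j f) f"
proof -
  assume "j < k"
  then have "adaptive_info lam k f ! j = take (Suc j) (adaptive_info lam k f) ! j" by simp
  also have "\<dots> = adaptive_info lam (Suc j) f ! j" using \<open>j < k\<close> by (simp add: take_adaptive_info)
  also have "\<dots> = lam j (adaptive_info lam j f) f" by (simp add: nth_append)
  finally show ?thesis .
qed

lemma nth_adaptive_info_causal:
  assumes "j < k" "\<And>ys ys'. (\<And>i. i < j \<Longrightarrow> ys ! i = ys' ! i) \<Longrightarrow> lam j ys f = lam j ys' f"
  shows "adaptive_info lam k f ! j = lam j (adaptive_info lam k f) f"
proof -
  have "adaptive_info lam k f ! j = lam j (adaptive_info lam j f) f"
    by (rule nth_adaptive_info[OF assms(1)])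
  also have "\<dots> = lam j (adaptive_info lam k f) f"
    using assms by (intro assms(2)) (simp add: nth_adaptive_info)
  finally show ?thesis .
qed

lemma adaptive_info_comp:
  "adaptive_info (\<lambda>k ys f. lam k ys (v f)) n f = adaptive_info lam n (v f)"
  by (induction n) simp_all

definition grid :: "nat \<Rightarrow> nat \<Rightarrow> real" where
  "grid n j = 2 ^ (n - 1 - j)"

definition defect :: "nat \<Rightarrow> nat \<Rightarrow> nat" where
  "defect m j = m div 2 ^ j"

lemma grid_ge_1: "1 \<le> grid n j"
  unfolding grid_def by simp

lemma grid_pos: "0 < grid n j"
  unfolding grid_def by simp

lemma grid_le: "grid n j \<le> 2 ^ n"
  unfolding grid_def by (intro power_increasing) auto

lemma grid_Suc: "Suc j \<le> n - 1 \<Longrightarrow> grid n (Suc j) = grid n j / 2"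
proof -
  assume "Suc j \<le> n - 1"
  then have "n - 1 - j = Suc (n - 1 - Suc j)" by arith
  then show ?thesis unfolding grid_def by simp
qed

lemma defect_le_Suc: "defect m j \<le> 2 * defect m (Suc j) + 1"
proof -
  have "defect m (Suc j) = defect m j div 2"
    unfolding defect_def by (simp only: power_Suc2 div_mult2_eq)
  then show ?thesis by simp
qed

lemma defect_Suc_less: "0 < m \<Longrightarrow> defect m (Suc j) < m"
  unfolding defect_def by (intro div_less_dividend one_less_power) auto

lemma defect_eq_0: "m < 2 ^ j \<Longrightarrow> defect m j = 0"
  unfolding defect_def by simp

primrec refine :: "nat \<Rightarrow> int \<Rightarrow> nat \<Rightarrow> real list \<Rightarrow> real \<Rightarrow> real" where
  "refine n L 0 ys u = u"
| "refine n L (Suc j) ys u = halve_step (grid n j) L (ys ! j) (refine n L j ys u)"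

lemma refine_cong: "(\<And>i. i < j \<Longrightarrow> ys ! i = ys' ! i) \<Longrightarrow> refine n L j ys u = refine n L j ys' u"
  by (induction j) simp_all

lemma continuous_on_refine [continuous_intros]:
  "continuous_on A g \<Longrightarrow> continuous_on A (\<lambda>x. refine n L j ys (g x))"
  by (induction j) (simp_all add: continuous_on_halve_step)

lemma refine_dist: "\<bar>refine n L j ys u - u\<bar> \<le> real j * 2 ^ n"
proof (induction j)
  case (Suc j)
  have "\<bar>refine n L (Suc j) ys u - refine n L j ys u\<bar> \<le> grid n j / 2"
    using halve_step_dist[OF grid_pos, of n j L "ys ! j" "refine n L j ys u"] by simp
  also have "\<dots> \<le> 2 ^ n" using grid_le[of n j] zero_le_power[of "2::real" n] by linarith
  finally show ?case using Suc.IH by (simp add: algebra_simps)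
qed simp

lemma abs_refine_le:
  assumes "j \<le> n" "\<bar>u\<bar> \<le> B"
  shows "\<bar>refine n L j ys u\<bar> \<le> B + real n * 2 ^ n"
proof -
  have "real j * 2 ^ n \<le> real n * (2 ^ n :: real)" using assms(1) by (intro mult_right_mono) auto
  then show ?thesis
    using refine_dist[of n L j ys u] abs_triangle_ineq2[of "refine n L j ys u" u] assms(2)
    by linarith
qed

definition rounding_functional ::
    "nat \<Rightarrow> nat \<Rightarrow> int \<Rightarrow> real \<Rightarrow> nat \<Rightarrow> real list \<Rightarrow> (nat \<Rightarrow> real) \<Rightarrow> real" where
  "rounding_functional n m L W k ys x =
     (if k < n - 1
      then order_stat m (m - defect m (Suc k)) (\<lambda>i. infdist (refine n L k ys (x i) / grid n k) \<int>)
      else base_enc m W (\<lambda>i. refine n L k ys (x i)))"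

lemma card_refine_grid:
  fixes x :: "nat \<Rightarrow> real"
  assumes "0 < m" "\<And>i. i < m \<Longrightarrow> \<bar>x i\<bar> \<le> B" "B + real n * 2 ^ n + 1 \<le> of_int L"
    and "\<And>j. j < k \<Longrightarrow> ys ! j = rounding_functional n m L W j ys x" "k \<le> n - 1"
  shows "m - defect m k \<le> card {i. i < m \<and> refine n L k ys (x i) / grid n k \<in> \<int>}"
  using assms(4,5)
proof (induction k)
  case (Suc j)
  then have j: "j < n - 1" by simp
  define h where "h = grid n j"
  define r where "r = (\<lambda>i. refine n L j ys (x i))"
  have bound: "\<bar>r i / h\<bar> \<le> of_int L - 1" if "i < m" for i
  proof -
    have "\<bar>r i / h\<bar> \<le> \<bar>r i\<bar>"
      using grid_ge_1[of n j] by (simp add: h_def abs_divide divide_le_eq mult_le_cancel_left1)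
    also have "\<dots> \<le> B + real n * 2 ^ n"
      unfolding r_def using j that assms(2) by (intro abs_refine_le) auto
    finally show ?thesis using assms(3) by linarith
  qed
  have grid_half: "grid n (Suc j) = h / 2" unfolding h_def by (rule grid_Suc) (use j in simp)
  have "m - defect m (Suc j) \<le> card {i. i < m \<and> halve_step h L (ys ! j) (r i) / (h / 2) \<in> \<int>}"
    by (rule card_grid_halve_step[OF grid_pos[of n j, folded h_def] defect_Suc_less[OF assms(1)]
          defect_le_Suc _ bound])
      (use Suc j in \<open>simp_all add: r_def h_def rounding_functional_def\<close>)
  also have "{i. i < m \<and> halve_step h L (ys ! j) (r i) / (h / 2) \<in> \<int>}
      = {i. i < m \<and> refine n L (Suc j) ys (x i) / grid n (Suc j) \<in> \<int>}"
    using grid_half by (simp only: r_def h_def refine.simps)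
  finally show ?case .
qed (simp add: defect_def)

lemma refine_Ints:
  fixes x :: "nat \<Rightarrow> real"
  assumes "0 < m" "m < 2 ^ (n - 1)" "\<And>i. i < m \<Longrightarrow> \<bar>x i\<bar> \<le> B" "B + real n * 2 ^ n + 1 \<le> of_int L"
    and "\<And>j. j < n - 1 \<Longrightarrow> ys ! j = rounding_functional n m L W j ys x"
  shows "\<forall>i<m. refine n L (n - 1) ys (x i) \<in> \<int>"
proof -
  have "m \<le> card {i. i < m \<and> refine n L (n - 1) ys (x i) / grid n (n - 1) \<in> \<int>}"
    using card_refine_grid[OF assms(1,3,4) assms(5) order_refl] defect_eq_0[OF assms(2)] by simp
  then have "{i. i < m \<and> refine n L (n - 1) ys (x i) \<in> \<int>} = {..<m}"
    by (intro card_seteq) (auto simp: grid_def)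
  then show ?thesis by auto
qed

lemma continuous_on_rounding_functional:
  assumes "0 < m" "\<And>i. i < m \<Longrightarrow> continuous_on A (\<lambda>f. x f i)"
  shows "continuous_on A (\<lambda>f. rounding_functional n m L W k ys (x f))"
proof (cases "k < n - 1")
  case True
  have "continuous_on A (\<lambda>f. order_stat m (m - defect m (Suc k))
      (\<lambda>i. infdist (refine n L k ys (x f i) / grid n k) \<int>))"
    using defect_Suc_less[OF assms(1), of k] assms(2) grid_pos[of n k]
    by (intro continuous_on_order_stat continuous_intros) auto
  then show ?thesis using True by (simp add: rounding_functional_def)
next
  case False
  have "continuous_on A (\<lambda>f. base_enc m W (\<lambda>i. refine n L k ys (x f i)))"
    using assms(2) by (intro continuous_on_base_enc continuous_intros)
  then show ?thesis using False by (simp add: rounding_functional_def)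
qed

lemma nth_adaptive_info_rounding_functional:
  "j < n \<Longrightarrow> adaptive_info (rounding_functional n m L W) n x ! j
     = rounding_functional n m L W j (adaptive_info (rounding_functional n m L W) n x) x"
  by (intro nth_adaptive_info_causal) (auto simp: rounding_functional_def cong: refine_cong)

lemma rounding_info_determines:
  fixes x x' :: "nat \<Rightarrow> real"
  assumes "0 < m" "m < 2 ^ (n - 1)"
    and "\<And>i. i < m \<Longrightarrow> \<bar>x i\<bar> \<le> B" "\<And>i. i < m \<Longrightarrow> \<bar>x' i\<bar> \<le> B"
    and "B + real n * 2 ^ n + 1 \<le> of_int L" "2 * (B + real n * 2 ^ n) + 1 \<le> W"
    and "adaptive_info (rounding_functional n m L W) n x
      = adaptive_info (rounding_functional n m L W) n x'"
    and "i < m"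
  shows "\<bar>x i - x' i\<bar> \<le> 2 * (real n * 2 ^ n)"
proof -
  have "0 < n" using assms(1,2) by (cases n) auto
  define ys where "ys = adaptive_info (rounding_functional n m L W) n x"
  define r where "r = (\<lambda>i. refine n L (n - 1) ys (x i))"
  define r' where "r' = (\<lambda>i. refine n L (n - 1) ys (x' i))"
  have ys: "ys ! j = rounding_functional n m L W j ys x"
      "ys ! j = rounding_functional n m L W j ys x'" if "j < n" for j
    using nth_adaptive_info_rounding_functional[OF that, of m L W x]
      nth_adaptive_info_rounding_functional[OF that, of m L W x']
    unfolding ys_def assms(7) by simp_all
  have "\<forall>i<m. r i \<in> \<int>"
    unfolding r_def by (rule refine_Ints[OF assms(1,2,3,5)]) (use ys(1) in auto)
  moreover have "\<forall>i<m. r' i \<in> \<int>"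
    unfolding r'_def by (rule refine_Ints[OF assms(1,2,4,5)]) (use ys(2) in auto)
  moreover have "\<forall>i<m. \<bar>r i\<bar> \<le> B + real n * 2 ^ n" "\<forall>i<m. \<bar>r' i\<bar> \<le> B + real n * 2 ^ n"
    unfolding r_def r'_def using assms(3,4) by (auto intro!: abs_refine_le)
  moreover have "base_enc m W r = base_enc m W r'"
    using ys[of "n - 1"] \<open>0 < n\<close> by (simp add: rounding_functional_def r_def r'_def)
  ultimately have "r i = r' i" using assms(6,8) by (intro base_enc_inj[rule_format]) auto
  moreover have "real (n - 1) * 2 ^ n \<le> real n * (2 ^ n :: real)" by (intro mult_right_mono) auto
  then have "\<bar>r i - x i\<bar> \<le> real n * 2 ^ n" "\<bar>r' i - x' i\<bar> \<le> real n * 2 ^ n"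
    unfolding r_def r'_def using refine_dist[of n L "n - 1" ys] by (meson order_trans)+
  ultimately show ?thesis by linarith
qed

section \<open>From nonadaptive to adaptive information\<close>

lemma compact_uniformly_less:
  fixes D G :: "'a::topological_space \<Rightarrow> real"
  assumes "compact K" "continuous_on K D" "continuous_on K G" "\<And>p. p \<in> K \<Longrightarrow> 0 \<le> D p"
    and "\<And>p. p \<in> K \<Longrightarrow> D p = 0 \<Longrightarrow> G p < c"
  shows "\<exists>\<delta>>0. \<forall>p\<in>K. D p \<le> \<delta> \<longrightarrow> G p < c"
proof (cases "K = {}")
  case False
  define \<psi> where "\<psi> p = D p + max 0 (c - G p)" for p
  have "continuous_on K \<psi>" unfolding \<psi>_def using assms(2,3) by (intro continuous_intros)
  then obtain p0 where p0: "p0 \<in> K" "\<And>p. p \<in> K \<Longrightarrow> \<psi> p0 \<le> \<psi> p"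
    using continuous_attains_inf[OF assms(1) False] by blast
  have "0 < \<psi> p0"
    using assms(4,5)[OF p0(1)] unfolding \<psi>_def by (cases "D p0 = 0") auto
  moreover have "G p < c" if "p \<in> K" "D p \<le> \<psi> p0 / 2" for p
    using that p0(2)[of p] \<open>0 < \<psi> p0\<close> unfolding \<psi>_def by auto
  ultimately show ?thesis by (intro exI[of _ "\<psi> p0 / 2"]) auto
qed (auto intro: exI[of _ 1])

lemma continuous_on_Times_fst_snd:
  assumes "continuous_on F h"
  shows "continuous_on (F \<times> F) (\<lambda>p. h (fst p))" "continuous_on (F \<times> F) (\<lambda>p. h (snd p))"
  by (rule continuous_on_compose2[OF assms], auto intro!: continuous_intros)+

lemma nonadaptive_separation:
  fixes S :: "'a::metric_space \<Rightarrow> 'b::real_normed_vector" and N :: "nat \<Rightarrow> 'a \<Rightarrow> real"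
  assumes "compact F" "continuous_on F S" "\<And>i. i < m \<Longrightarrow> continuous_on F (N i)"
    and "\<And>f. f \<in> F \<Longrightarrow> norm (S f - Phi (map (\<lambda>i. N i f) [0..<m])) < r"
  shows "\<exists>\<delta>>0. \<forall>f\<in>F. \<forall>g\<in>F. (\<forall>i<m. \<bar>N i f - N i g\<bar> \<le> \<delta>) \<longrightarrow> norm (S f - S g) < 2 * r"
proof -
  define D where "D p = (\<Sum>i<m. \<bar>N i (fst p) - N i (snd p)\<bar>)" for p
  define G where "G p = norm (S (fst p) - S (snd p))" for p
  have "G p < 2 * r" if "p \<in> F \<times> F" "D p = 0" for p
  proof -
    have "map (\<lambda>i. N i (fst p)) [0..<m] = map (\<lambda>i. N i (snd p)) [0..<m]"
      using that(2) unfolding D_def by (simp add: sum_nonneg_eq_0_iff)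
    then have "norm (S (fst p) - Phi (map (\<lambda>i. N i (snd p)) [0..<m])) < r"
      using assms(4)[of "fst p"] that(1) by (metis mem_Times_iff)
    then show ?thesis
      using assms(4)[of "snd p"] that(1)
        dist_triangle2[of "S (fst p)" "S (snd p)" "Phi (map (\<lambda>i. N i (snd p)) [0..<m])"]
      unfolding G_def dist_norm by auto
  qed
  moreover have "continuous_on (F \<times> F) D"
    unfolding D_def using assms(3) by (intro continuous_intros continuous_on_Times_fst_snd) auto
  moreover have "continuous_on (F \<times> F) G"
    unfolding G_def using assms(2) by (intro continuous_intros continuous_on_Times_fst_snd)
  moreover have "0 \<le> D p" for p unfolding D_def by (simp add: sum_nonneg)
  ultimately obtain \<delta> where "\<delta> > 0" and \<delta>: "\<And>p. p \<in> F \<times> F \<Longrightarrow> D p \<le> \<delta> \<Longrightarrow> G p < 2 * r"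
    using compact_uniformly_less[OF compact_Times[OF assms(1,1)], of D G] by blast
  have "norm (S f - S g) < 2 * r"
    if "f \<in> F" "g \<in> F" "\<forall>i<m. \<bar>N i f - N i g\<bar> \<le> \<delta> / (m + 1)" for f g
  proof -
    have "D (f, g) \<le> (\<Sum>i<m. \<delta> / (m + 1))" unfolding D_def using that(3) by (intro sum_mono) auto
    also have "\<dots> \<le> \<delta>" using \<open>\<delta> > 0\<close> by (simp add: field_simps)
    finally show ?thesis using \<delta>[of "(f, g)"] that(1,2) unfolding G_def by simp
  qed
  then show ?thesis using \<open>\<delta> > 0\<close> by (intro exI[of _ "\<delta> / (m + 1)"]) auto
qed

lemma compact_imp_bounded_family:
  fixes N :: "nat \<Rightarrow> 'a::topological_space \<Rightarrow> real"
  assumes "compact F" "\<And>i. i < m \<Longrightarrow> continuous_on F (N i)"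
  obtains B where "\<And>i f. i < m \<Longrightarrow> f \<in> F \<Longrightarrow> \<bar>N i f\<bar> \<le> B"
proof -
  have "continuous_on F (\<lambda>f. \<Sum>i<m. \<bar>N i f\<bar>)" using assms(2) by (intro continuous_intros) auto
  then have "bounded ((\<lambda>f. \<Sum>i<m. \<bar>N i f\<bar>) ` F)"
    using assms(1) by (intro compact_imp_bounded compact_continuous_image)
  then obtain B where B: "\<And>f. f \<in> F \<Longrightarrow> \<bar>\<Sum>i<m. \<bar>N i f\<bar>\<bar> \<le> B"
    unfolding bounded_iff by auto
  have "\<bar>N i f\<bar> \<le> B" if "i < m" "f \<in> F" for i f
    using member_le_sum[of i "{..<m}" "\<lambda>i. \<bar>N i f\<bar>"] B[OF that(2)] that(1) by auto
  then show ?thesis using that by blast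
qed

lemma adaptive_info_recovers_nonadaptive:
  fixes N :: "nat \<Rightarrow> 'a::topological_space \<Rightarrow> real"
  assumes "compact F" "\<And>i. i < m \<Longrightarrow> continuous_on F (N i)" "0 < m" "m < 2 ^ (n - 1)" "0 < \<delta>"
  obtains lam where "\<And>k ys. k < n \<Longrightarrow> continuous_on F (lam k ys)"
    and "\<And>f g i. f \<in> F \<Longrightarrow> g \<in> F \<Longrightarrow> adaptive_info lam n f = adaptive_info lam n g \<Longrightarrow> i < m
           \<Longrightarrow> \<bar>N i f - N i g\<bar> \<le> \<delta>"
proof -
  obtain B where B: "\<And>i f. i < m \<Longrightarrow> f \<in> F \<Longrightarrow> \<bar>N i f\<bar> \<le> B"
    using compact_imp_bounded_family[of F m N, OF assms(1,2)] by blast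
  define C where "C = real n * 2 ^ n"
  define s where "s = 2 * C / \<delta>"
  define L where "L = \<lceil>s * \<bar>B\<bar> + C\<rceil> + 1"
  define W where "W = 2 * (s * \<bar>B\<bar> + C) + 1"
  define lam where "lam = (\<lambda>k ys f. rounding_functional n m L W k ys (\<lambda>i. s * N i f))"
  have "0 < n" using assms(3,4) by (cases n) auto
  then have "0 < s" unfolding s_def C_def using assms(5) by simp
  have "continuous_on F (lam k ys)" for k ys
    unfolding lam_def using assms(2,3)
    by (intro continuous_on_rounding_functional continuous_intros) auto
  moreover have "\<bar>N i f - N i g\<bar> \<le> \<delta>"
    if "f \<in> F" "g \<in> F" "adaptive_info lam n f = adaptive_info lam n g" "i < m" for f g i
  proof -
    have bound: "\<bar>s * N i h\<bar> \<le> s * \<bar>B\<bar>" if "i < m" "h \<in> F" for i h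
      using B[OF that] \<open>0 < s\<close> by (simp add: abs_mult mult_left_mono)
    have "\<bar>s * N i f - s * N i g\<bar> \<le> 2 * C"
      unfolding C_def
    proof (rule rounding_info_determines[OF assms(3,4) bound bound])
      show "s * \<bar>B\<bar> + real n * 2 ^ n + 1 \<le> of_int L" unfolding L_def C_def by linarith
      show "2 * (s * \<bar>B\<bar> + real n * 2 ^ n) + 1 \<le> W" unfolding W_def C_def by simp
      show "adaptive_info (rounding_functional n m L W) n (\<lambda>i. s * N i f)
          = adaptive_info (rounding_functional n m L W) n (\<lambda>i. s * N i g)"
        using that(3) unfolding lam_def adaptive_info_comp[where v = "\<lambda>f i. s * N i f"] .
    qed (use that in auto)
    then have "s * \<bar>N i f - N i g\<bar> \<le> 2 * C"
      using \<open>0 < s\<close> by (simp add: abs_mult flip: right_diff_distrib)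
    then show ?thesis using \<open>0 < s\<close> assms(5) unfolding s_def by (simp add: field_simps)
  qed
  ultimately show ?thesis using that by blast
qed

lemma e_cont_le_if_info_determines:
  fixes lam :: "nat \<Rightarrow> real list \<Rightarrow> 'a::topological_space \<Rightarrow> real"
  assumes "\<And>k ys. k < n \<Longrightarrow> continuous_on F (lam k ys)"
    and "\<And>f g. f \<in> F \<Longrightarrow> g \<in> F \<Longrightarrow> adaptive_info lam n f = adaptive_info lam n g
           \<Longrightarrow> norm (S f - S g) \<le> c"
  shows "e_cont F S n \<le> ereal c"
proof -
  define Phi where "Phi ys = S (SOME g. g \<in> F \<and> adaptive_info lam n g = ys)" for ys
  have "norm (S f - Phi (adaptive_info lam n f)) \<le> c" if "f \<in> F" for f
  proof -
    define g where "g = (SOME g. g \<in> F \<and> adaptive_info lam n g = adaptive_info lam n f)"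
    have "g \<in> F \<and> adaptive_info lam n g = adaptive_info lam n f"
      unfolding g_def
      by (rule someI[where x = f]) (simp add: that)
    then have "norm (S f - S g) \<le> c" using assms(2)[OF that] by simp
    then show ?thesis unfolding Phi_def g_def .
  qed
  then have "wc_error F S (\<lambda>f. Phi (adaptive_info lam n f)) \<le> ereal c"
    unfolding wc_error_def by (intro SUP_least) simp
  moreover have "e_cont F S n \<le> wc_error F S (\<lambda>f. Phi (adaptive_info lam n f))"
    unfolding e_cont_def
    by (intro INF_lower CollectI exI[of _ lam] exI[of _ Phi] conjI refl allI impI assms(1))
  ultimately show ?thesis by simp
qed

lemma e_cont_non_less_obtains:
  fixes S :: "'a::topological_space \<Rightarrow> 'b::real_normed_vector"
  assumes "e_cont_non F S k < ereal r"
  obtains N :: "nat \<Rightarrow> 'a \<Rightarrow> real" and Phi :: "real list \<Rightarrow> 'b"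
  where "\<And>i. i < k \<Longrightarrow> continuous_on F (N i)"
    and "\<And>f. f \<in> F \<Longrightarrow> norm (S f - Phi (map (\<lambda>i. N i f) [0..<k])) < r"
proof -
  obtain A where "A \<in> {\<lambda>f. Phi (map (\<lambda>i. N i f) [0..<k]) | (N :: nat \<Rightarrow> 'a \<Rightarrow> real) Phi.
      \<forall>i<k. continuous_on F (N i)}" and err: "wc_error F S A < ereal r"
    using assms unfolding e_cont_non_def INF_less_iff ..
  then obtain N :: "nat \<Rightarrow> 'a \<Rightarrow> real" and Phi :: "real list \<Rightarrow> 'b"
    where N: "\<forall>i<k. continuous_on F (N i)"
    and A: "A = (\<lambda>f. Phi (map (\<lambda>i. N i f) [0..<k]))"
    unfolding mem_Collect_eq by blast
  have "norm (S f - Phi (map (\<lambda>i. N i f) [0..<k])) < r" if "f \<in> F" for f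
    using le_less_trans[OF SUP_upper[OF that] err[unfolded wc_error_def A]] by simp
  with N show ?thesis by (intro that[of N Phi]) auto
qed

lemma ereal_le_twice_if:
  fixes x y :: ereal
  assumes "\<And>r. y < ereal r \<Longrightarrow> x \<le> ereal (2 * r)"
  shows "x \<le> 2 * y"
proof (rule dense_ge)
  fix z assume "2 * y < z"
  then show "x \<le> z"
  proof (cases z)
    case (real t)
    then have "y < ereal (t / 2)" using \<open>2 * y < z\<close> by (cases y) auto
    then show ?thesis using assms[of "t / 2"] real by simp
  qed simp_all
qed

theorem theorem3:
  fixes F :: "'a::metric_space set" and S :: "'a \<Rightarrow> 'b::real_normed_vector" and n :: nat
  assumes "compact F" and "continuous_on F S" and "n \<ge> 2"
  shows "e_cont F S n \<le> 2 * e_cont_non F S (2 ^ (n - 2))"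
proof (rule ereal_le_twice_if)
  fix r assume "e_cont_non F S (2 ^ (n - 2)) < ereal r"
  then obtain N :: "nat \<Rightarrow> 'a \<Rightarrow> real" and Phi :: "real list \<Rightarrow> 'b"
    where N: "\<And>i. i < 2 ^ (n - 2) \<Longrightarrow> continuous_on F (N i)"
      and err: "\<And>f. f \<in> F \<Longrightarrow> norm (S f - Phi (map (\<lambda>i. N i f) [0..<2 ^ (n - 2)])) < r"
    using e_cont_non_less_obtains by blast
  obtain \<delta> where "\<delta> > 0" and sep: "\<And>f g. f \<in> F \<Longrightarrow> g \<in> F \<Longrightarrow> \<forall>i<2 ^ (n - 2). \<bar>N i f - N i g\<bar> \<le> \<delta>
      \<Longrightarrow> norm (S f - S g) < 2 * r"
    using nonadaptive_separation[OF assms(1,2) N err] by blast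
  have m: "0 < (2::nat) ^ (n - 2)" "(2::nat) ^ (n - 2) < 2 ^ (n - 1)"
    using assms(3) by (simp_all add: power_strict_increasing_iff)
  obtain lam where cont: "\<And>k ys. k < n \<Longrightarrow> continuous_on F (lam k ys)"
    and rec: "\<And>f g i. f \<in> F \<Longrightarrow> g \<in> F \<Longrightarrow> adaptive_info lam n f = adaptive_info lam n g
      \<Longrightarrow> i < 2 ^ (n - 2) \<Longrightarrow> \<bar>N i f - N i g\<bar> \<le> \<delta>"
    using adaptive_info_recovers_nonadaptive[where N = N and n = n, OF assms(1) N m \<open>\<delta> > 0\<close>]
    by blast
  show "e_cont F S n \<le> ereal (2 * r)"
    by (rule e_cont_le_if_info_determines[where lam = lam, OF cont])
      (simp_all add: less_imp_le rec sep)
qed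

end
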